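(* Let $n\ge2$ and consider the general linear–quadratic game with dynamics $\mathbf x_{t+1}=\mathbf A_t\mathbf x_t+\mathbf B_t\mathbf u_t+\mathbf w_t$ and per-step costs $c^i_t(\mathbf x_t,\mathbf u_t)=\mathbf x_t^\top Q^i_t\mathbf x_t+\mathbf u_t^\top R^i_t\mathbf u_t$, $i\in\{1,\dots,n\}$, and suppose the players are exchangeable. Then there exist matrices $A_t,B_t,\bar A_t,\bar B_t$ such that, with $\bar x_t=\frac1n\sum_{j=1}^nx^j_t$ and $\bar u_t=\frac1n\sum_{j=1}^nu^j_t$, the dynamics of every player $i$ read $x^i_{t+1}=A_tx^i_t+B_tu^i_t+\bar A_t\bar x_t+\bar B_t\bar u_t+w^i_t$. Moreover, there exist matrices $Q_t,R_t,S^x_t,S^u_t,\bar Q_t,\bar R_t,G^x_t,G^u_t$ such that the cost of every player $i$ can be written as $c^i_t=(x^i_t)^\top Q_tx^i_t+2(x^i_t)^\top S^x_t\bar x_t+\bar x_t^\top\bar Q_t\bar x_t+(u^i_t)^\top R_tu^i_t+2(u^i_t)^\top S^u_t\bar u_t+\bar u_t^\top\bar R_t\bar u_t+\frac1n\sum_{j=1}^n\big((x^j_t)^\top G^x_tx^j_t+(u^j_t)^\top G^u_tu^j_t\big)$.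
   Context: Here $\mathbf x_t=(x^1_t,\dots,x^n_t)$ with $x^i_t\in\mathbb R^{d_x}$, $\mathbf u_t=(u^1_t,\dots,u^n_t)$ with $u^i_t\in\mathbb R^{d_u}$, $\mathbf w_t=(w^1_t,\dots,w^n_t)$ with $w^i_t\in\mathbb R^{d_x}$, and $\mathbf A_t,\mathbf B_t,Q^i_t,R^i_t$ are matrices of appropriate (block) sizes; write $\mathbf c_t=(c^1_t,\dots,c^n_t)$. For $i,j\in\{1,\dots,n\}$ let $\sigma_{i,j}$ denote the map swapping the $i$-th and $j$-th components of an $n$-component vector. The players are called exchangeable if for every pair $i,j$ and every $t$: whenever $\mathbf x_{t+1}=\mathbf A_t\mathbf x_t+\mathbf B_t\mathbf u_t+\mathbf w_t$, also $\sigma_{i,j}(\mathbf x_{t+1})=\mathbf A_t\sigma_{i,j}(\mathbf x_t)+\mathbf B_t\sigma_{i,j}(\mathbf u_t)+\sigma_{i,j}(\mathbf w_t)$; and $\sigma_{i,j}(\mathbf c_t(\mathbf x_t,\mathbf u_t))=\mathbf c_t(\sigma_{i,j}(\mathbf x_t),\sigma_{i,j}(\mathbf u_t))$ for all $\mathbf x_t,\mathbf u_t$. *)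

theory Defs
  imports "HOL-Analysis.Analysis"
begin

text \<open>Joint vectors of n players are functions from a finite player type 'p to the
  per-player component space. A block matrix of size (n*d1) x (n*d2) is represented by
  its blocks: M i j is the (i,j) block.\<close>

definition blk_apply :: "('p::finite \<Rightarrow> 'p \<Rightarrow> real^'b^'a) \<Rightarrow> ('p \<Rightarrow> real^'b) \<Rightarrow> ('p \<Rightarrow> real^'a)" where
  "blk_apply M X = (\<lambda>i. \<Sum>j\<in>UNIV. M i j *v X j)"

definition blk_quad :: "('p::finite \<Rightarrow> 'p \<Rightarrow> real^'a^'a) \<Rightarrow> ('p \<Rightarrow> real^'a) \<Rightarrow> real" where
  "blk_quad M X = (\<Sum>i\<in>UNIV. \<Sum>j\<in>UNIV. X i \<bullet> (M i j *v X j))"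

definition swapc :: "'p \<Rightarrow> 'p \<Rightarrow> ('p \<Rightarrow> 'v) \<Rightarrow> ('p \<Rightarrow> 'v)" where
  "swapc i j X = (\<lambda>k. X (if k = i then j else if k = j then i else k))"

definition mean :: "('p::finite \<Rightarrow> real^'a) \<Rightarrow> real^'a" where
  "mean X = (1 / real CARD('p)) *\<^sub>R (\<Sum>j\<in>UNIV. X j)"

end

theory Submission
  imports Defs
begin

text \<open>Exchangeability says that the dynamics and the vector of costs commute with every
  transposition of players. Consequently the dynamics and the cost of player \<open>i\<close> are those of a
  fixed reference player \<open>a\<close> evaluated at the states permuted by \<open>(a i)\<close>, which leaves the mean
  unchanged; and player \<open>a\<close>'s row of the dynamics and its cost form are invariant under all
  transpositions fixing \<open>a\<close>. Testing this invariance on states supported on one or two players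
  shows that the blocks \<open>A\<^sub>a\<^sub>m\<close> (\<open>m \<noteq> a\<close>) all coincide, and that the symmetrised blocks
  \<open>M\<^sub>l\<^sub>m + M\<^sub>m\<^sub>l\<^sup>T\<close> of the cost form take only three values besides the own block: one for
  \<open>l = a \<noteq> m\<close>, one for \<open>l = m \<noteq> a\<close> (as quadratic forms) and one for \<open>l \<noteq> m\<close> both different
  from \<open>a\<close>. Writing the sum over the other players as \<open>n \<cdot> mean - x\<^sup>a\<close> then yields the
  mean-field form.\<close>

lemma inner_vector_matrix: "x \<bullet> (y v* M) = y \<bullet> ((M::real^'a::finite^'b::finite) *v x)"
  by (metis dot_lmul_matrix inner_commute)

lemma sum_UNIV_remove:
  "sum g (UNIV :: 'p::finite set) = g a + sum g (- {a})"
  by (simp add: sum.remove[of UNIV a] Compl_eq_Diff_UNIV)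

lemma swapc_eq_comp_transpose: "swapc i j X = X \<circ> Transposition.transpose i j"
  by (simp add: swapc_def Transposition.transpose_def fun_eq_iff)

lemma swapc_apply_first [simp]: "swapc i j X i = X j"
  by (simp add: swapc_def)

lemma swapc_const [simp]: "swapc i j (\<lambda>_. c) = (\<lambda>_. c)"
  by (simp add: swapc_def)

lemma swapc_fun_upd:
  "swapc i j (X(l := v)) = (swapc i j X)(Transposition.transpose i j l := v)"
proof -
  have "Transposition.transpose i j k = l \<longleftrightarrow> k = Transposition.transpose i j l" for k
    by (metis transpose_involutory)
  then show ?thesis
    by (simp add: swapc_eq_comp_transpose fun_eq_iff)
qed

lemma sum_swapc:
  "(\<Sum>k\<in>UNIV. f (swapc i j X k)) = (\<Sum>k\<in>(UNIV::'p::finite set). (f (X k) :: 'b::comm_monoid_add))"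
  using sum.permute[OF permutes_swap_id, of i UNIV j "f \<circ> X"]
  by (simp add: swapc_eq_comp_transpose comp_assoc)

lemma mean_swapc: "mean (swapc i j X) = mean X"
  unfolding mean_def using sum_swapc[of "\<lambda>v. v" i j X] by simp

definition swap_equivariant :: "(('p \<Rightarrow> 'v) \<Rightarrow> ('p \<Rightarrow> 'w)) \<Rightarrow> bool" where
  "swap_equivariant F \<longleftrightarrow> (\<forall>i j X. swapc i j (F X) = F (swapc i j X))"

lemma swap_equivariant_apply:
  assumes "swap_equivariant F"
  shows "F X i = F (swapc a i X) a"
proof -
  have "F X i = swapc a i (F X) a"
    by simp
  also have "\<dots> = F (swapc a i X) a"
    using assms by (simp add: swap_equivariant_def)
  finally show ?thesis .
qed

lemma swap_equivariant_fix:
  assumes "swap_equivariant F" and "i \<noteq> a" and "j \<noteq> a"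
  shows "F (swapc i j X) a = F X a"
proof -
  have "F (swapc i j X) a = swapc i j (F X) a"
    using assms(1) by (simp add: swap_equivariant_def)
  also have "\<dots> = F X a"
    using assms(2,3) by (simp add: swapc_def)
  finally show ?thesis .
qed

lemma blk_apply_single: "blk_apply M ((\<lambda>_. 0)(m := v)) i = M i m *v v"
proof -
  have "blk_apply M ((\<lambda>_. 0)(m := v)) i = (\<Sum>j\<in>UNIV. if j = m then M i m *v v else 0)"
    unfolding blk_apply_def by (intro sum.cong) auto
  then show ?thesis by simp
qed

lemma blk_quad_supported:
  assumes "\<And>i. i \<notin> K \<Longrightarrow> X i = 0"
  shows "blk_quad M X = (\<Sum>i\<in>K. \<Sum>j\<in>K. X i \<bullet> (M i j *v X j))"
proof -
  have "(\<Sum>j\<in>UNIV. X i \<bullet> (M i j *v X j)) = (\<Sum>j\<in>K. X i \<bullet> (M i j *v X j))" for i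
    by (rule sum.mono_neutral_right) (auto simp: assms)
  then have "blk_quad M X = (\<Sum>i\<in>UNIV. \<Sum>j\<in>K. X i \<bullet> (M i j *v X j))"
    by (simp add: blk_quad_def)
  also have "\<dots> = (\<Sum>i\<in>K. \<Sum>j\<in>K. X i \<bullet> (M i j *v X j))"
    by (rule sum.mono_neutral_right) (auto simp: assms)
  finally show ?thesis .
qed

lemma blk_quad_single: "blk_quad M ((\<lambda>_. 0)(l := v)) = v \<bullet> (M l l *v v)"
  by (subst blk_quad_supported[of "{l}"]) auto

lemma blk_apply_zero [simp]: "blk_apply M (\<lambda>_. 0) = (\<lambda>_. 0)"
  by (simp add: blk_apply_def)

lemma blk_quad_zero [simp]: "blk_quad M (\<lambda>_. 0) = 0"
  by (simp add: blk_quad_def)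

text \<open>A quadratic form determines its block matrix only up to this symmetrisation, so invariance
  of the cost is expressed through \<open>blk_sym\<close>.\<close>

definition blk_sym :: "('p \<Rightarrow> 'p \<Rightarrow> real^'a^'a) \<Rightarrow> 'p \<Rightarrow> 'p \<Rightarrow> real^'a^'a" where
  "blk_sym M l m = M l m + transpose (M m l)"

lemma inner_blk_sym:
  "v \<bullet> (blk_sym M l m *v w) = v \<bullet> (M l m *v w) + w \<bullet> (M m l *v (v::real^'a::finite))"
  by (simp add: blk_sym_def matrix_vector_mult_add_rdistrib inner_add_right inner_vector_matrix)

lemma blk_quad_pair:
  assumes "l \<noteq> m"
  shows "blk_quad M ((\<lambda>_. 0)(l := v, m := w))
    = v \<bullet> (M l l *v v) + v \<bullet> (blk_sym M l m *v w) + w \<bullet> (M m m *v w)"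
  using assms by (subst blk_quad_supported[of "{l, m}"]) (auto simp: inner_blk_sym)

lemma blk_apply_row_offdiag_eq:
  assumes inv: "\<And>j k Y. j \<noteq> a \<Longrightarrow> k \<noteq> a \<Longrightarrow> blk_apply M (swapc j k Y) a = blk_apply M Y a"
    and "l \<noteq> a" and "m \<noteq> a"
  shows "M a l = M a m"
proof -
  have "M a l *v v = M a m *v v" for v
  proof -
    have "swapc l m ((\<lambda>_. 0)(m := v)) = (\<lambda>_. 0)(l := v)"
      by (simp add: swapc_fun_upd)
    then show ?thesis
      using inv[OF assms(2,3), of "(\<lambda>_. 0)(m := v)"] by (simp add: blk_apply_single)
  qed
  then show ?thesis
    by (simp add: matrix_eq)
qed

lemma blk_apply_row_const_offdiag:
  fixes M :: "'p::finite \<Rightarrow> 'p \<Rightarrow> real^'b::finite^'c::finite"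
  assumes "\<And>m. m \<noteq> a \<Longrightarrow> M a m = N"
  shows "blk_apply M Y a = (M a a - N) *v Y a + (real CARD('p) *\<^sub>R N) *v mean Y"
proof -
  have "blk_apply M Y a = M a a *v Y a + (\<Sum>m\<in>-{a}. M a m *v Y m)"
    unfolding blk_apply_def by (rule sum_UNIV_remove)
  also have "(\<Sum>m\<in>-{a}. M a m *v Y m) = N *v ((\<Sum>m\<in>UNIV. Y m) - Y a)"
    using sum_UNIV_remove[of Y a] by (simp add: assms vec.sum)
  finally show ?thesis
    by (simp add: mean_def matrix_vector_mult_diff_rdistrib matrix_vector_mult_diff_distrib
        scaleR_matrix_vector_assoc[symmetric] matrix_vector_mult_scaleR)
qed

lemma blk_apply_mean_field_form:
  fixes M :: "'p::finite \<Rightarrow> 'p \<Rightarrow> real^'b::finite^'c::finite"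
  assumes equiv: "swap_equivariant (blk_apply M)"
  shows "\<exists>A Abar. \<forall>Y i. blk_apply M Y i = A *v Y i + Abar *v mean Y"
proof -
  define a :: 'p where "a = undefined"
  have "M a l = M a m" if "l \<noteq> a" "m \<noteq> a" for l m
    using blk_apply_row_offdiag_eq[OF swap_equivariant_fix[OF equiv] that] .
  then obtain N where N: "\<And>m. m \<noteq> a \<Longrightarrow> M a m = N"
    by blast
  have "blk_apply M Y i = (M a a - N) *v Y i + (real CARD('p) *\<^sub>R N) *v mean Y" for Y i
    using swap_equivariant_apply[OF equiv, of Y i a] blk_apply_row_const_offdiag[of a M N, OF N, of "swapc a i Y"]
    by (simp add: mean_swapc)
  then show ?thesis
    by blast
qed

lemma blk_quad_diag_transpose_eq:
  assumes inv: "\<And>j k Y. j \<noteq> a \<Longrightarrow> k \<noteq> a \<Longrightarrow> blk_quad N (swapc j k Y) = blk_quad N Y"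
    and "j \<noteq> a" and "k \<noteq> a"
  defines "\<tau> \<equiv> Transposition.transpose j k"
  shows "v \<bullet> (N (\<tau> l) (\<tau> l) *v v) = v \<bullet> (N l l *v v)"
  using inv[OF assms(2,3), of "(\<lambda>_. 0)(l := v)"]
  by (simp add: swapc_fun_upd blk_quad_single \<tau>_def)

lemma blk_sym_transpose_eq:
  assumes inv: "\<And>j k Y. j \<noteq> a \<Longrightarrow> k \<noteq> a \<Longrightarrow> blk_quad N (swapc j k Y) = blk_quad N Y"
    and "j \<noteq> a" and "k \<noteq> a" and "l \<noteq> m"
  defines "\<tau> \<equiv> Transposition.transpose j k"
  shows "blk_sym N (\<tau> l) (\<tau> m) = blk_sym N l m"
proof -
  have "v \<bullet> (blk_sym N (\<tau> l) (\<tau> m) *v w) = v \<bullet> (blk_sym N l m *v w)" for v w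
  proof -
    have "\<tau> l \<noteq> \<tau> m"
      using \<open>l \<noteq> m\<close> unfolding \<tau>_def by (metis transpose_eq_imp_eq)
    moreover have "swapc j k ((\<lambda>_. 0)(l := v, m := w)) = (\<lambda>_. 0)(\<tau> l := v, \<tau> m := w)"
      by (simp add: swapc_fun_upd \<tau>_def)
    ultimately show ?thesis
      using inv[OF assms(2,3), of "(\<lambda>_. 0)(l := v, m := w)"] \<open>l \<noteq> m\<close>
        blk_quad_diag_transpose_eq[OF inv assms(2,3), of v l] blk_quad_diag_transpose_eq[OF inv assms(2,3), of w m]
      by (simp add: blk_quad_pair \<tau>_def)
  qed
  then have "blk_sym N (\<tau> l) (\<tau> m) *v w = blk_sym N l m *v w" for w
    using vector_eq_ldot by blast
  then show ?thesis
    by (simp add: matrix_eq)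
qed

lemma blk_sym_offdiag_eq:
  assumes inv: "\<And>j k Y. j \<noteq> a \<Longrightarrow> k \<noteq> a \<Longrightarrow> blk_quad N (swapc j k Y) = blk_quad N Y"
    and "l \<noteq> a" "m \<noteq> a" "l \<noteq> m" and "l' \<noteq> a" "m' \<noteq> a" "l' \<noteq> m'"
  shows "blk_sym N l m = blk_sym N l' m'"
proof -
  define m1 where "m1 = Transposition.transpose l l' m"
  have "m1 \<noteq> a" "m1 \<noteq> l'"
    using assms(2-5) by (auto simp: m1_def transpose_eq_iff)
  have "blk_sym N l m = blk_sym N l' m1"
    using blk_sym_transpose_eq[OF inv \<open>l \<noteq> a\<close> \<open>l' \<noteq> a\<close> \<open>l \<noteq> m\<close>] by (simp add: m1_def)
  also have "\<dots> = blk_sym N l' m'"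
    using blk_sym_transpose_eq[OF inv \<open>m1 \<noteq> a\<close> \<open>m' \<noteq> a\<close> \<open>m1 \<noteq> l'\<close>[symmetric]]
      \<open>m1 \<noteq> l'\<close> \<open>l' \<noteq> m'\<close> by simp
  finally show ?thesis .
qed

lemma blk_quad_pattern_split:
  fixes N :: "'p::finite \<Rightarrow> 'p \<Rightarrow> real^'a::finite^'a" and Y :: "'p \<Rightarrow> real^'a"
  assumes diag: "\<And>l v. l \<noteq> a \<Longrightarrow> v \<bullet> (N l l *v v) = v \<bullet> (G *v v)"
    and row: "\<And>m. m \<noteq> a \<Longrightarrow> blk_sym N a m = P"
    and offdiag: "\<And>l m. l \<noteq> a \<Longrightarrow> m \<noteq> a \<Longrightarrow> l \<noteq> m \<Longrightarrow> blk_sym N l m = H"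
  defines "T \<equiv> \<Sum>l\<in>-{a}. Y l" and "K \<equiv> G - (1/2) *\<^sub>R H"
  shows "blk_quad N Y = Y a \<bullet> (N a a *v Y a) + Y a \<bullet> (P *v T) + (T \<bullet> (H *v T)) / 2
    + (\<Sum>l\<in>-{a}. Y l \<bullet> (K *v Y l))"
proof -
  define f where "f l m = Y l \<bullet> (N l m *v Y m)" for l m
  have "blk_quad N Y = f a a + (\<Sum>m\<in>-{a}. f a m + f m a) + (\<Sum>l\<in>-{a}. \<Sum>m\<in>-{a}. f l m)"
    unfolding blk_quad_def f_def[symmetric] sum_UNIV_remove[of _ a] by (simp add: sum.distrib)
  moreover have "(\<Sum>m\<in>-{a}. f a m + f m a) = Y a \<bullet> (P *v T)"
  proof -
    have "f a m + f m a = Y a \<bullet> (P *v Y m)" if "m \<noteq> a" for m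
      using row[OF that] by (simp add: f_def inner_blk_sym[symmetric])
    then show ?thesis
      by (simp add: T_def inner_sum_right vec.sum)
  qed
  moreover have "2 * (\<Sum>l\<in>-{a}. \<Sum>m\<in>-{a}. f l m) = T \<bullet> (H *v T) + 2 * (\<Sum>l\<in>-{a}. Y l \<bullet> (K *v Y l))"
  proof -
    have pair: "f l m + f m l = Y l \<bullet> (H *v Y m) + (if l = m then 2 * (Y l \<bullet> (K *v Y l)) else 0)"
      if "l \<noteq> a" "m \<noteq> a" for l m
    proof (cases "l = m")
      case True
      then show ?thesis
        using diag[OF that(1), of "Y l"]
        by (simp add: f_def K_def matrix_vector_mult_diff_rdistrib inner_diff_right
            scaleR_matrix_vector_assoc[symmetric])
    next
      case False
      then show ?thesis
        using offdiag[OF that False] by (simp add: f_def inner_blk_sym[symmetric])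
    qed
    have "2 * (\<Sum>l\<in>-{a}. \<Sum>m\<in>-{a}. f l m) = (\<Sum>l\<in>-{a}. \<Sum>m\<in>-{a}. f l m + f m l)"
      using sum.swap[of f "-{a}" "-{a}"] by (simp add: sum.distrib)
    also have "\<dots> = (\<Sum>l\<in>-{a}. \<Sum>m\<in>-{a}. Y l \<bullet> (H *v Y m)) + (\<Sum>l\<in>-{a}. 2 * (Y l \<bullet> (K *v Y l)))"
      by (simp add: pair sum.distrib)
    also have "\<dots> = T \<bullet> (H *v T) + 2 * (\<Sum>l\<in>-{a}. Y l \<bullet> (K *v Y l))"
      by (simp add: T_def inner_sum_left inner_sum_right vec.sum sum_distrib_left) (rule sum.swap)
    finally show ?thesis .
  qed
  ultimately show ?thesis
    by (simp add: f_def)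
qed

definition mean_field_quad ::
    "real^'a^'a \<Rightarrow> real^'a^'a \<Rightarrow> real^'a^'a \<Rightarrow> real^'a^'a \<Rightarrow> ('p::finite \<Rightarrow> real^'a) \<Rightarrow> 'p \<Rightarrow> real"
  where "mean_field_quad Q S Qbar G Y i =
    Y i \<bullet> (Q *v Y i) + 2 * (Y i \<bullet> (S *v mean Y)) + mean Y \<bullet> (Qbar *v mean Y)
    + (1 / real CARD('p)) * (\<Sum>j\<in>UNIV. Y j \<bullet> (G *v Y j))"

lemma blk_quad_row_mean_field_form:
  fixes N :: "'p::finite \<Rightarrow> 'p \<Rightarrow> real^'a::finite^'a"
  assumes inv: "\<And>j k Y. j \<noteq> a \<Longrightarrow> k \<noteq> a \<Longrightarrow> blk_quad N (swapc j k Y) = blk_quad N Y"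
  shows "\<exists>Q S Qbar G. \<forall>Y. blk_quad N Y = mean_field_quad Q S Qbar G Y a"
proof -
  obtain G where G: "\<And>l v. l \<noteq> a \<Longrightarrow> v \<bullet> (N l l *v v) = v \<bullet> (G *v v)"
  proof (cases "\<exists>b. b \<noteq> a")
    case True
    then obtain b where "b \<noteq> a" by blast
    then show ?thesis
      using that[of "N b b"] blk_quad_diag_transpose_eq[OF inv _ \<open>b \<noteq> a\<close>] by (metis transpose_apply_first)
  qed (use that in blast)
  obtain P where P: "\<And>m. m \<noteq> a \<Longrightarrow> blk_sym N a m = P"
  proof (cases "\<exists>b. b \<noteq> a")
    case True
    then obtain b where "b \<noteq> a" by blast
    then show ?thesis
      using that[of "blk_sym N a b"] blk_sym_transpose_eq[OF inv _ \<open>b \<noteq> a\<close>, of _ a]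
      by (metis transpose_apply_first transpose_apply_other)
  qed (use that in blast)
  obtain H where H: "\<And>l m. l \<noteq> a \<Longrightarrow> m \<noteq> a \<Longrightarrow> l \<noteq> m \<Longrightarrow> blk_sym N l m = H"
  proof (cases "\<exists>b c. b \<noteq> a \<and> c \<noteq> a \<and> b \<noteq> c")
    case True
    then obtain b c where "b \<noteq> a" "c \<noteq> a" "b \<noteq> c" by blast
    then show ?thesis
      using that[of "blk_sym N b c"] blk_sym_offdiag_eq[OF inv] by blast
  qed (use that in blast)
  \<comment> \<open>The witnesses come from substituting \<open>\<Sum>l\<noteq>a. Y l = n \<cdot> mean Y - Y a\<close> and expanding.\<close>
  define n where "n = real CARD('p)"
  define K where "K = G - (1/2) *\<^sub>R H"
  define Q where "Q = N a a - P + (1/2) *\<^sub>R H - K"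
  define Sx where "Sx = (n/2) *\<^sub>R (P - (1/2) *\<^sub>R (H + transpose H))"
  define Qbar where "Qbar = (n^2/2) *\<^sub>R H"
  define Gx where "Gx = n *\<^sub>R K"
  have "blk_quad N Y = mean_field_quad Q Sx Qbar Gx Y a" for Y
  proof -
    have others: "(\<Sum>l\<in>-{a}. Y l) = n *\<^sub>R mean Y - Y a"
      using sum_UNIV_remove[of Y a] by (simp add: mean_def n_def)
    have others_K: "(\<Sum>l\<in>-{a}. Y l \<bullet> (K *v Y l)) = (\<Sum>l\<in>UNIV. Y l \<bullet> (K *v Y l)) - Y a \<bullet> (K *v Y a)"
      using sum_UNIV_remove[of "\<lambda>l. Y l \<bullet> (K *v Y l)" a] by simp
    have "blk_quad N Y = Y a \<bullet> (N a a *v Y a) + Y a \<bullet> (P *v (\<Sum>l\<in>-{a}. Y l))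
      + ((\<Sum>l\<in>-{a}. Y l) \<bullet> (H *v (\<Sum>l\<in>-{a}. Y l))) / 2 + (\<Sum>l\<in>-{a}. Y l \<bullet> (K *v Y l))"
      unfolding K_def by (rule blk_quad_pattern_split) (use G P H in auto)
    also have "\<dots> = mean_field_quad Q Sx Qbar Gx Y a"
      unfolding mean_field_quad_def others others_K Q_def Sx_def Qbar_def Gx_def
      by (simp add: matrix_vector_mult_add_rdistrib matrix_vector_mult_diff_rdistrib
          matrix_vector_right_distrib matrix_vector_mult_diff_distrib
          scaleR_matrix_vector_assoc[symmetric] matrix_vector_mult_scaleR
          inner_add_left inner_add_right inner_diff_left inner_diff_right inner_vector_matrix
          sum_distrib_left power2_eq_square n_def field_simps)
    finally show ?thesis .
  qed
  then show ?thesis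
    by blast
qed

lemma blk_quad_mean_field_form:
  fixes M :: "'p::finite \<Rightarrow> 'p \<Rightarrow> 'p \<Rightarrow> real^'a::finite^'a"
  assumes equiv: "swap_equivariant (\<lambda>Y i. blk_quad (M i) Y)"
  shows "\<exists>Q S Qbar G. \<forall>Y i. blk_quad (M i) Y = mean_field_quad Q S Qbar G Y i"
proof -
  define a :: 'p where "a = undefined"
  have "blk_quad (M a) (swapc j k Y) = blk_quad (M a) Y" if "j \<noteq> a" "k \<noteq> a" for j k Y
    using swap_equivariant_fix[OF equiv that] by simp
  then obtain Q S Qbar G where row: "\<And>Y. blk_quad (M a) Y = mean_field_quad Q S Qbar G Y a"
    using blk_quad_row_mean_field_form by metis
  have "blk_quad (M i) Y = mean_field_quad Q S Qbar G Y i" for Y i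
    using swap_equivariant_apply[OF equiv, where X = Y and i = i and a = a] row[of "swapc a i Y"]
    by (simp add: mean_field_quad_def mean_swapc sum_swapc[of "\<lambda>v. v \<bullet> (G *v v)"])
  then show ?thesis
    by blast
qed

theorem proposition1:
  fixes AA :: "nat \<Rightarrow> 'p::finite \<Rightarrow> 'p \<Rightarrow> real^'x::finite^'x"
    and BB :: "nat \<Rightarrow> 'p \<Rightarrow> 'p \<Rightarrow> real^'u::finite^'x"
    and QQ :: "nat \<Rightarrow> 'p \<Rightarrow> 'p \<Rightarrow> 'p \<Rightarrow> real^'x^'x"
    and RR :: "nat \<Rightarrow> 'p \<Rightarrow> 'p \<Rightarrow> 'p \<Rightarrow> real^'u^'u"
  defines "dyn \<equiv> (\<lambda>t X U W i. blk_apply (AA t) X i + blk_apply (BB t) U i + W i)"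
    and "c \<equiv> (\<lambda>t X U i. blk_quad (QQ t i) X + blk_quad (RR t i) U)"
  assumes n2: "CARD('p) \<ge> 2"
    and exch_dyn: "\<And>i j t X U W X'.
        X' = dyn t X U W \<Longrightarrow>
        swapc i j X' = dyn t (swapc i j X) (swapc i j U) (swapc i j W)"
    and exch_cost: "\<And>i j t X U. swapc i j (c t X U) = c t (swapc i j X) (swapc i j U)"
  shows "\<forall>t. (\<exists>(A::real^'x^'x) (B::real^'u^'x) (Abar::real^'x^'x) (Bbar::real^'u^'x).
             \<forall>X U W i. dyn t X U W i =
                 A *v X i + B *v U i + Abar *v mean X + Bbar *v mean U + W i)
          \<and> (\<exists>(Q::real^'x^'x) (R::real^'u^'u) (Sx::real^'x^'x) (Su::real^'u^'u)
               (Qbar::real^'x^'x) (Rbar::real^'u^'u) (Gx::real^'x^'x) (Gu::real^'u^'u).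
             \<forall>X U i. c t X U i =
                 X i \<bullet> (Q *v X i) + 2 * (X i \<bullet> (Sx *v mean X)) + mean X \<bullet> (Qbar *v mean X)
               + U i \<bullet> (R *v U i) + 2 * (U i \<bullet> (Su *v mean U)) + mean U \<bullet> (Rbar *v mean U)
               + (1 / real CARD('p)) * (\<Sum>j\<in>UNIV. X j \<bullet> (Gx *v X j) + U j \<bullet> (Gu *v U j)))"
proof -
  have dyn_equiv: "swapc i j (dyn t X U W) = dyn t (swapc i j X) (swapc i j U) (swapc i j W)"
    for t i j X U W
    using exch_dyn by blast
  have "\<exists>A Abar. \<forall>X i. blk_apply (AA t) X i = A *v X i + Abar *v mean X" for t
    using dyn_equiv[of _ _ t _ "\<lambda>_. 0" "\<lambda>_. 0"]
    by (intro blk_apply_mean_field_form) (simp add: swap_equivariant_def dyn_def)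
  then obtain A Abar where A: "\<And>t X i. blk_apply (AA t) X i = A t *v X i + Abar t *v mean X"
    by metis
  have "\<exists>B Bbar. \<forall>U i. blk_apply (BB t) U i = B *v U i + Bbar *v mean U" for t
    using dyn_equiv[of _ _ t "\<lambda>_. 0" _ "\<lambda>_. 0"]
    by (intro blk_apply_mean_field_form) (simp add: swap_equivariant_def dyn_def)
  then obtain B Bbar where B: "\<And>t U i. blk_apply (BB t) U i = B t *v U i + Bbar t *v mean U"
    by metis
  have "\<exists>Q Sx Qbar Gx. \<forall>X i. blk_quad (QQ t i) X = mean_field_quad Q Sx Qbar Gx X i" for t
    using exch_cost[of _ _ t _ "\<lambda>_. 0"]
    by (intro blk_quad_mean_field_form) (simp add: swap_equivariant_def c_def)
  then obtain Q Sx Qbar Gx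
    where Q: "\<And>t X i. blk_quad (QQ t i) X = mean_field_quad (Q t) (Sx t) (Qbar t) (Gx t) X i"
    by metis
  have "\<exists>R Su Rbar Gu. \<forall>U i. blk_quad (RR t i) U = mean_field_quad R Su Rbar Gu U i" for t
    using exch_cost[of _ _ t "\<lambda>_. 0"]
    by (intro blk_quad_mean_field_form) (simp add: swap_equivariant_def c_def)
  then obtain R Su Rbar Gu
    where R: "\<And>t U i. blk_quad (RR t i) U = mean_field_quad (R t) (Su t) (Rbar t) (Gu t) U i"
    by metis
  show ?thesis
    unfolding dyn_def c_def A B Q R mean_field_quad_def
    by (intro allI conjI exI) (simp_all add: sum.distrib algebra_simps)
qed

end
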